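(* Let $\lambda_1,\lambda_2$ be as in the context. For $K\in(-1,1)\setminus\{0\}$ let $b_K$ solve $b_K'(v)=\sqrt{\lambda_1^2-K(\lambda_1^2\cos^2 b_K(v)+\lambda_2^2\sin^2 b_K(v))}$, $b_K(0)=0$, let $W_K>0$ be the unique number with $b_K(W_K)=\pi$, let $x_{3,K}$ solve $x_{3,K}'(v)=\frac{\lambda_1\lambda_2K}{\lambda_1+b_K'(v)}$, $x_{3,K}(0)=0$, and let $\mathfrak{H}_K=X_K(\mathbb{C})\subset\widetilde{E(2)}$ be the helicoid given by $$X_K(u+iv)=\Big(\tfrac{1}{\lambda_1^2\lambda_2}\big(\tfrac{1}{\lambda_1}\cos x_{3,K}(v)\sin b_K(v)+\tfrac{1}{\lambda_2}\sin x_{3,K}(v)\cos b_K(v)\big)x_{3,K}'(v)\sinh(-\lambda_1u),\ \tfrac{1}{\lambda_1^2\lambda_2}\big(\tfrac{1}{\lambda_1}\sin x_{3,K}(v)\sin b_K(v)-\tfrac{1}{\lambda_2}\cos x_{3,K}(v)\cos b_K(v)\big)x_{3,K}'(v)\sinh(-\lambda_1u),\ x_{3,K}(v)\Big).$$ Then for every real number $T\neq0$ there exists $K\in(-1,1)\setminus\{0\}$ such that $\mathfrak{H}_K$ has period $T$, i.e. $2|x_{3,K}(W_K)|=|T|$, so that $\mathfrak{H}_K$ is invariant under left multiplication by $(0,0,T)$.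
   Context: $\widetilde{E(2)}$ is $\mathbb{R}^3$ with coordinates $(x_1,x_2,x_3)$ and group law $(a_1,b_1,c_1)*(a_2,b_2,c_2)=(a_1+a_2\cos c_1-b_2\sin c_1,\ b_1+a_2\sin c_1+b_2\cos c_1,\ c_1+c_2)$, with the left-invariant metric $\lambda_1^2(\cos x_3\,dx_1+\sin x_3\,dx_2)^2+\lambda_2^2(-\sin x_3\,dx_1+\cos x_3\,dx_2)^2+\frac{1}{\lambda_1^2\lambda_2^2}dx_3^2$, where either $\lambda_1>\lambda_2>0$ or $\lambda_1=\lambda_2=1$. The helicoid $\mathfrak{H}_K$ satisfies $(0,0,2x_{3,K}(W_K))*X_K(u+iv)=X_K(u+i(v+2W_K))$; its period is the translation length $2x_{3,K}(W_K)$, and since $(0,0,-t)$ is the inverse of $(0,0,t)$, invariance under $(0,0,t)$ is equivalent to invariance under $(0,0,-t)$. *)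

theory Defs
  imports "HOL-Analysis.Analysis"
begin

text \<open>Group law of the universal cover of E(2), points of R^3 as triples.\<close>
definition e2_mult :: "real \<times> real \<times> real \<Rightarrow> real \<times> real \<times> real \<Rightarrow> real \<times> real \<times> real" where
  "e2_mult p q = (case p of (a1, b1, c1) \<Rightarrow> case q of (a2, b2, c2) \<Rightarrow>
     (a1 + a2 * cos c1 - b2 * sin c1, b1 + a2 * sin c1 + b2 * cos c1, c1 + c2))"

definition admissible_lambdas :: "real \<Rightarrow> real \<Rightarrow> bool" where
  "admissible_lambdas l1 l2 \<longleftrightarrow> (l1 > l2 \<and> l2 > 0) \<or> (l1 = 1 \<and> l2 = 1)"

definition bK_rhs :: "real \<Rightarrow> real \<Rightarrow> real \<Rightarrow> real \<Rightarrow> real" where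
  "bK_rhs l1 l2 K s = sqrt (l1\<^sup>2 - K * (l1\<^sup>2 * (cos s)\<^sup>2 + l2\<^sup>2 * (sin s)\<^sup>2))"

definition helicoid_data :: "real \<Rightarrow> real \<Rightarrow> real \<Rightarrow> (real \<Rightarrow> real) \<Rightarrow> (real \<Rightarrow> real) \<Rightarrow> real \<Rightarrow> bool" where
  "helicoid_data l1 l2 K b x3 W \<longleftrightarrow>
     (\<forall>v. (b has_real_derivative bK_rhs l1 l2 K (b v)) (at v)) \<and> b 0 = 0 \<and>
     (\<forall>v. (x3 has_real_derivative (l1 * l2 * K / (l1 + bK_rhs l1 l2 K (b v)))) (at v)) \<and> x3 0 = 0 \<and>
     W > 0 \<and> b W = pi \<and> (\<forall>w>0. b w = pi \<longrightarrow> w = W)"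

definition helicoid_X :: "real \<Rightarrow> real \<Rightarrow> real \<Rightarrow> (real \<Rightarrow> real) \<Rightarrow> (real \<Rightarrow> real) \<Rightarrow> complex \<Rightarrow> real \<times> real \<times> real" where
  "helicoid_X l1 l2 K b x3 z =
     (let u = Re z; v = Im z;
          dx3 = l1 * l2 * K / (l1 + bK_rhs l1 l2 K (b v)) in
      (1 / (l1\<^sup>2 * l2) * (1 / l1 * cos (x3 v) * sin (b v) + 1 / l2 * sin (x3 v) * cos (b v)) * dx3 * sinh (- l1 * u),
       1 / (l1\<^sup>2 * l2) * (1 / l1 * sin (x3 v) * sin (b v) - 1 / l2 * cos (x3 v) * cos (b v)) * dx3 * sinh (- l1 * u),
       x3 v))"

end

theory Submission
  imports Defs
begin

text \<open>
  The right-hand side \<open>F\<close> of \<open>b' = F(b)\<close> is positive, bounded, continuous and \<open>\<pi>\<close>-periodic, so the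
  ODE is solved by the inverse of the arrival time \<open>G(s) = \<integral>\<^sub>0\<^sup>s 1/F\<close>; the solution is unique,
  hence \<open>b(v + W) = b(v) + \<pi>\<close> with \<open>W = G(\<pi>)\<close>. By quadrature \<open>x\<^sub>3 = \<Phi> \<circ> b\<close> with \<open>\<Phi>' = x\<^sub>3'/F\<close>,
  so \<open>x\<^sub>3(v + W) = x\<^sub>3(v) + x\<^sub>3(W)\<close> and \<open>x\<^sub>3(W) = \<integral>\<^sub>0\<^sup>\<pi> \<lambda>\<^sub>1\<lambda>\<^sub>2K/((\<lambda>\<^sub>1 + F)F)\<close>. Left multiplication by
  \<open>(0, 0, t)\<close> rotates the horizontal coordinates by the angle \<open>t\<close> and shifts \<open>x\<^sub>3\<close> by \<open>t\<close>, so for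
  \<open>t = 2x\<^sub>3(W)\<close> it maps \<open>X(u + iv)\<close> to \<open>X(u + i(v + 2W))\<close>.
  This half period is continuous in \<open>K\<close> and vanishes at \<open>K = 0\<close>; writing \<open>K = 1 - \<delta>\<^sup>2\<close>,
  the bound \<open>F(s) \<le> \<lambda>\<^sub>1(\<delta> + s)\<close> shows it is at least \<open>\<lambda>\<^sub>2/(4\<lambda>\<^sub>1) ln(1/\<delta>)\<close>, which is unbounded as
  \<open>K \<rightarrow> 1\<close>. The intermediate value theorem yields the required \<open>K\<close>.
\<close>

definition primitive :: "(real \<Rightarrow> real) \<Rightarrow> real \<Rightarrow> real" where
  "primitive f x = (LBINT t=ereal 0..ereal x. f t)"

lemma primitive_has_real_derivative:
  assumes "continuous_on UNIV f"
  shows "(primitive f has_real_derivative f x) (at x)"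
proof -
  let ?I = "{-\<bar>x\<bar>-1..\<bar>x\<bar>+1}"
  have "(primitive f has_vector_derivative f x) (at x within ?I)"
    unfolding primitive_def
    using interval_integral_FTC2[of "-\<bar>x\<bar>-1" 0 "\<bar>x\<bar>+1" f x] continuous_on_subset[OF assms]
    by auto
  then have "(primitive f has_vector_derivative f x) (at x within {-\<bar>x\<bar>-1<..<\<bar>x\<bar>+1})"
    by (rule has_vector_derivative_within_subset) auto
  moreover have "at x within {-\<bar>x\<bar>-1<..<\<bar>x\<bar>+1} = at x"
    by (rule at_within_open) auto
  ultimately have "(primitive f has_vector_derivative f x) (at x)"
    by simp
  then show ?thesis
    by (simp add: has_real_derivative_iff_has_vector_derivative)
qed

lemma primitive_eq_integral:
  assumes "continuous_on {0..x} f" "0 \<le> x"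
  shows "primitive f x = integral {0..x} f"
  unfolding primitive_def
  using assms by (intro interval_integral_eq_integral borel_integrable_atLeastAtMost')

lemma primitive_0 [simp]: "primitive f 0 = 0"
  by (simp add: primitive_def)

lemma shift_eq_of_periodic_derivative:
  fixes x :: "real \<Rightarrow> real"
  assumes "\<And>v. (x has_real_derivative x' v) (at v)" "\<And>v. x' (v + P) = x' v"
  shows "x (v + P) = x v + (x P - x 0)"
proof -
  have "((\<lambda>v. x (v + P) - x v) has_real_derivative x' (v + P) - x' v) (at v)" for v
    using DERIV_diff[OF DERIV_shift[THEN iffD1, OF assms(1)[of "v + P"]] assms(1)[of v]] .
  then have "((\<lambda>v. x (v + P) - x v) has_real_derivative 0) (at v)" for v
    by (simp add: assms(2))
  from DERIV_isconst_all[OF allI, OF this, of v 0] show ?thesis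
    by simp
qed

locale positive_autonomous_ode =
  fixes F :: "real \<Rightarrow> real" and M :: real
  assumes continuous_F: "continuous_on UNIV F"
    and F_pos: "0 < F s"
    and F_le: "F s \<le> M"
begin

definition arrival_time :: "real \<Rightarrow> real" where
  "arrival_time = primitive (\<lambda>s. 1 / F s)"

definition solution :: "real \<Rightarrow> real" where
  "solution = inv arrival_time"

lemma F_nonzero [simp]: "F s \<noteq> 0"
  using F_pos[of s] by simp

lemma arrival_time_has_real_derivative: "(arrival_time has_real_derivative 1 / F s) (at s)"
  unfolding arrival_time_def
  by (intro primitive_has_real_derivative continuous_intros continuous_F) simp

lemma arrival_time_0 [simp]: "arrival_time 0 = 0"
  by (simp add: arrival_time_def)

lemma strict_mono_arrival_time: "strict_mono arrival_time"
proof (rule strict_monoI)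
  have "(arrival_time has_real_derivative 1 / F x) (at x) \<and> 0 < 1 / F x" for x
    using arrival_time_has_real_derivative F_pos by simp
  then show "arrival_time a < arrival_time b" if "a < b" for a b
    using DERIV_pos_imp_increasing[OF that] by blast
qed

lemma continuous_on_arrival_time: "continuous_on S arrival_time"
  using arrival_time_has_real_derivative
  by (meson DERIV_continuous continuous_at_imp_continuous_on)

lemma arrival_time_ge:
  assumes "0 \<le> s"
  shows "s / M \<le> arrival_time s"
proof -
  obtain z where "arrival_time s - arrival_time 0 = s * (1 / F z)"
    using MVT2[of 0 s arrival_time "\<lambda>z. 1 / F z"] assms arrival_time_has_real_derivative
    by (cases "s = 0") auto
  moreover have "1 / M \<le> 1 / F z"
    using F_pos F_le by (simp add: frac_le)
  ultimately show ?thesis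
    using assms mult_left_mono by (fastforce simp: divide_inverse)
qed

lemma arrival_time_le:
  assumes "s \<le> 0"
  shows "arrival_time s \<le> s / M"
proof -
  obtain z where "arrival_time 0 - arrival_time s = (0 - s) * (1 / F z)"
    using MVT2[of s 0 arrival_time "\<lambda>z. 1 / F z"] assms arrival_time_has_real_derivative
    by (cases "s = 0") auto
  moreover have "1 / M \<le> 1 / F z"
    using F_pos F_le by (simp add: frac_le)
  ultimately show ?thesis
    using assms mult_left_mono[of "1 / M" "1 / F z" "- s"] by (simp add: divide_inverse)
qed

lemma surj_arrival_time: "surj arrival_time"
proof -
  have M_pos: "0 < M"
    using F_pos[of 0] F_le[of 0] by linarith
  have "\<exists>x. y = arrival_time x" for y
  proof -
    define a where "a = \<bar>y\<bar> * M"
    have "0 \<le> a"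
      using M_pos by (simp add: a_def)
    have "arrival_time (- a) \<le> - a / M" "a / M \<le> arrival_time a"
      using arrival_time_le[of "- a"] arrival_time_ge[of a] \<open>0 \<le> a\<close> by simp_all
    moreover have "- a / M \<le> y" "y \<le> a / M"
      using M_pos by (simp_all add: a_def)
    ultimately obtain x where "arrival_time x = y"
      using IVT'[of arrival_time "- a" y a] continuous_on_arrival_time \<open>0 \<le> a\<close> by force
    then show ?thesis
      by metis
  qed
  then show ?thesis
    by (simp add: surj_def)
qed

lemma bij_arrival_time: "bij arrival_time"
  using strict_mono_arrival_time surj_arrival_time
  by (simp add: bij_def strict_mono_imp_inj_on)

lemma solution_eq_iff: "solution v = s \<longleftrightarrow> v = arrival_time s"
  unfolding solution_def using bij_arrival_time
  by (metis bij_inv_eq_iff)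

lemma solution_arrival_time [simp]: "solution (arrival_time s) = s"
  by (simp add: solution_eq_iff)

lemma arrival_time_solution [simp]: "arrival_time (solution v) = v"
  by (metis solution_eq_iff)

lemma solution_0 [simp]: "solution 0 = 0"
  by (simp add: solution_eq_iff)

lemma solution_has_real_derivative: "(solution has_real_derivative F (solution v)) (at v)"
proof -
  have "isCont solution (arrival_time (solution v))"
    by (rule isCont_inverse_function[where d=1 and f=arrival_time and g=solution and x="solution v"])
       (simp_all add: DERIV_isCont[OF arrival_time_has_real_derivative])
  then have "(solution has_real_derivative inverse (1 / F (solution v))) (at v)"
    by (intro DERIV_inverse_function[where a="v - 1" and b="v + 1" and f=arrival_time]
        arrival_time_has_real_derivative) simp_all
  then show ?thesis
    by simp
qed

lemma solution_unique:
  assumes "\<And>v. (c has_real_derivative F (c v)) (at v)" "c 0 = 0"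
  shows "c = solution"
proof
  fix v
  have "((\<lambda>v. arrival_time (c v) - v) has_real_derivative 1 / F (c v) * F (c v) - 1) (at v)" for v
    by (intro derivative_intros DERIV_chain2[OF arrival_time_has_real_derivative] assms(1))
  then have "((\<lambda>v. arrival_time (c v) - v) has_real_derivative 0) (at v)" for v
    by simp
  from DERIV_isconst_all[OF allI, OF this, of v 0] have "arrival_time (c v) = v"
    using assms(2) by simp
  then show "c v = solution v"
    using solution_eq_iff[of v "c v"] by simp
qed

lemma solution_add_arrival_time:
  assumes "\<And>s. F (s + d) = F s"
  shows "solution (v + arrival_time d) = solution v + d"
proof -
  have "(\<lambda>v. solution (v + arrival_time d) - d) = solution"
  proof (rule solution_unique)
    fix v
    have "F (solution (v + arrival_time d) - d) = F (solution (v + arrival_time d))"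
      using assms[of "solution (v + arrival_time d) - d"] by simp
    then show "((\<lambda>v. solution (v + arrival_time d) - d) has_real_derivative
        F (solution (v + arrival_time d) - d)) (at v)"
      using DERIV_diff[OF DERIV_shift[THEN iffD1, OF solution_has_real_derivative] DERIV_const]
      by simp
  qed simp
  from fun_cong[OF this, of v] show ?thesis
    by linarith
qed

lemma primitive_comp_solution_has_real_derivative:
  assumes "continuous_on UNIV g"
  shows "((\<lambda>v. primitive (\<lambda>s. g s / F s) (solution v)) has_real_derivative g (solution v)) (at v)"
proof -
  have "continuous_on UNIV (\<lambda>s. g s / F s)"
    by (intro continuous_intros assms continuous_F) simp
  from DERIV_chain2[OF primitive_has_real_derivative[OF this] solution_has_real_derivative]
  show ?thesis
    by simp
qed

lemma quadrature:
  assumes "continuous_on UNIV g" "\<And>v. (x has_real_derivative g (solution v)) (at v)"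
  shows "x v = x 0 + primitive (\<lambda>s. g s / F s) (solution v)"
proof -
  have "((\<lambda>v. x v - primitive (\<lambda>s. g s / F s) (solution v)) has_real_derivative 0) (at v)" for v
    using DERIV_diff[OF assms(2) primitive_comp_solution_has_real_derivative[OF assms(1)]] by simp
  from DERIV_isconst_all[OF allI, OF this, of v 0] show ?thesis
    by simp
qed

end

lemma bK_rhs_eq_sin:
  "bK_rhs l1 l2 K s = sqrt (l1\<^sup>2 * (1 - K) + K * (l1\<^sup>2 - l2\<^sup>2) * (sin s)\<^sup>2)"
proof -
  have "(cos s)\<^sup>2 = 1 - (sin s)\<^sup>2"
    by (simp add: cos_squared_eq)
  then show ?thesis
    unfolding bK_rhs_def by (simp only:) (simp add: algebra_simps)
qed

lemma bK_rhs_add_pi [simp]: "bK_rhs l1 l2 K (s + pi) = bK_rhs l1 l2 K s"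
  by (simp add: bK_rhs_def)

lemma continuous_on_bK_rhs [continuous_intros]:
  fixes f g :: "'a::t2_space \<Rightarrow> real"
  shows "continuous_on S f \<Longrightarrow> continuous_on S g \<Longrightarrow> continuous_on S (\<lambda>x. bK_rhs l1 l2 (g x) (f x))"
  unfolding bK_rhs_def by (intro continuous_intros)

lemma bK_rhs_bounds:
  assumes "0 < l2" "l2 \<le> l1" "0 \<le> K" "K < 1"
  shows "0 < bK_rhs l1 l2 K s" "bK_rhs l1 l2 K s \<le> l1"
proof -
  have "l2\<^sup>2 \<le> l1\<^sup>2"
    using assms by (simp add: power_mono)
  moreover have "(sin s)\<^sup>2 \<le> 1"
    by (simp add: abs_square_le_1)
  ultimately have "K * (l1\<^sup>2 - l2\<^sup>2) * (sin s)\<^sup>2 \<le> K * l1\<^sup>2" "0 \<le> K * (l1\<^sup>2 - l2\<^sup>2) * (sin s)\<^sup>2"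
    using assms mult_mono[of "l1\<^sup>2 - l2\<^sup>2" "l1\<^sup>2" "(sin s)\<^sup>2" 1]
    by (auto simp: mult.assoc intro!: mult_left_mono)
  moreover have "0 < l1\<^sup>2 * (1 - K)"
    using assms by simp
  ultimately have "0 < l1\<^sup>2 * (1 - K) + K * (l1\<^sup>2 - l2\<^sup>2) * (sin s)\<^sup>2"
    "l1\<^sup>2 * (1 - K) + K * (l1\<^sup>2 - l2\<^sup>2) * (sin s)\<^sup>2 \<le> l1\<^sup>2"
    by (simp_all add: algebra_simps)
  then show "0 < bK_rhs l1 l2 K s" "bK_rhs l1 l2 K s \<le> l1"
    using assms unfolding bK_rhs_eq_sin by (auto intro: real_le_lsqrt)
qed

lemma bK_rhs_le_linear:
  assumes "0 \<le> l1" "0 \<le> \<delta>" "\<delta> \<le> 1" "0 \<le> t"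
  shows "bK_rhs l1 l2 (1 - \<delta>\<^sup>2) t \<le> l1 * (\<delta> + t)"
proof -
  define K where "K = 1 - \<delta>\<^sup>2"
  have K: "0 \<le> K" "K \<le> 1"
    using assms by (simp_all add: K_def power_le_one)
  have "K * (l1\<^sup>2 - l2\<^sup>2) \<le> K * l1\<^sup>2"
    using K by (intro mult_left_mono) simp_all
  also have "\<dots> \<le> l1\<^sup>2"
    using K by (simp add: mult_left_le_one_le)
  finally have "K * (l1\<^sup>2 - l2\<^sup>2) * (sin t)\<^sup>2 \<le> l1\<^sup>2 * t\<^sup>2"
    using power_mono[OF abs_sin_x_le_abs_x abs_ge_zero, of t 2] by (intro mult_mono) simp_all
  moreover have "l1\<^sup>2 * (1 - K) = (l1 * \<delta>)\<^sup>2"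
    by (simp add: K_def power_mult_distrib)
  moreover have "0 \<le> 2 * (l1 * \<delta>) * (l1 * t)"
    using assms by simp
  moreover have "(l1 * t)\<^sup>2 = l1\<^sup>2 * t\<^sup>2"
    by (simp add: power_mult_distrib)
  ultimately have "l1\<^sup>2 * (1 - K) + K * (l1\<^sup>2 - l2\<^sup>2) * (sin t)\<^sup>2 \<le> (l1 * \<delta> + l1 * t)\<^sup>2"
    unfolding power2_sum by linarith
  then show ?thesis
    unfolding bK_rhs_eq_sin K_def[symmetric] using assms
    by (simp add: real_le_lsqrt distrib_left)
qed

lemma e2_mult_vertical_add: "e2_mult (0, 0, s) (e2_mult (0, 0, t) q) = e2_mult (0, 0, s + t) q"
  by (cases q) (simp add: e2_mult_def sin_add cos_add algebra_simps)

lemma e2_mult_vertical_0 [simp]: "e2_mult (0, 0, 0) q = q"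
  by (cases q) (simp add: e2_mult_def)

lemma vertical_translation_image_range:
  fixes X :: "'a::ab_group_add \<Rightarrow> real \<times> real \<times> real"
  assumes "\<And>z. e2_mult (0, 0, c) (X z) = X (z + w)"
  shows "e2_mult (0, 0, c) ` range X = range X" "e2_mult (0, 0, - c) ` range X = range X"
proof -
  have "e2_mult (0, 0, - c) (X z) = X (z + - w)" for z
    using assms[of "z - w"] e2_mult_vertical_add[of "- c" c "X (z - w)"] by simp
  moreover have "range (\<lambda>z. X (z + w')) = range X" for w'
  proof -
    have "range (\<lambda>z. X (z + w')) = X ` range (\<lambda>z. z + w')"
      by (simp only: image_image)
    then show ?thesis
      by simp
  qed
  ultimately show "e2_mult (0, 0, c) ` range X = range X" "e2_mult (0, 0, - c) ` range X = range X"
    using assms by (simp_all only: image_image)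
qed

lemma e2_mult_vertical_rotation:
  "e2_mult (0, 0, c)
     (k * (p * cos x * S + q * sin x * C) * D * U, k * (p * sin x * S - q * cos x * C) * D * U, x) =
   (k * (p * cos (x + c) * S + q * sin (x + c) * C) * D * U,
    k * (p * sin (x + c) * S - q * cos (x + c) * C) * D * U, x + c)"
  by (simp add: e2_mult_def cos_add sin_add algebra_simps)

lemma e2_mult_helicoid_X:
  assumes "\<And>v. b (v + P) = b v + 2 * pi" "\<And>v. x3 (v + P) = x3 v + c"
  shows "e2_mult (0, 0, c) (helicoid_X l1 l2 K b x3 z) = helicoid_X l1 l2 K b x3 (z + \<i> * of_real P)"
proof -
  have "Re (z + \<i> * of_real P) = Re z" "Im (z + \<i> * of_real P) = Im z + P"
    by simp_all
  then show ?thesis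
    by (simp only: helicoid_X_def Let_def assms bK_rhs_def sin_periodic cos_periodic
        e2_mult_vertical_rotation)
qed

definition half_period :: "real \<Rightarrow> real \<Rightarrow> real \<Rightarrow> real" where
  "half_period l1 l2 K =
     integral {0..pi} (\<lambda>s. l1 * l2 * K / (l1 + bK_rhs l1 l2 K s) / bK_rhs l1 l2 K s)"

lemma half_period_0 [simp]: "half_period l1 l2 0 = 0"
  by (simp add: half_period_def)

lemma continuous_on_half_period:
  assumes "0 < l2" "l2 \<le> l1" "k < 1"
  shows "continuous_on {0..k} (half_period l1 l2)"
proof -
  have "bK_rhs l1 l2 K s \<noteq> 0" "l1 + bK_rhs l1 l2 K s \<noteq> 0" if "K \<in> {0..k}" for K s
    using bK_rhs_bounds[of l2 l1 K s] assms that by auto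
  then have "continuous_on ({0..k} \<times> cbox 0 pi)
      (\<lambda>(K, s). l1 * l2 * K / (l1 + bK_rhs l1 l2 K s) / bK_rhs l1 l2 K s)"
    unfolding case_prod_beta' by (intro continuous_intros) auto
  from integral_continuous_on_param[OF this] show ?thesis
    unfolding half_period_def by simp
qed

lemma half_period_integrand_ge:
  assumes "0 < l2" "l2 \<le> l1" "0 < \<delta>" "\<delta> \<le> 1 / 2" "0 \<le> t"
  defines "K \<equiv> 1 - \<delta>\<^sup>2"
  shows "l2 / (4 * l1) * (1 / (\<delta> + t)) \<le> l1 * l2 * K / (l1 + bK_rhs l1 l2 K t) / bK_rhs l1 l2 K t"
proof -
  let ?F = "bK_rhs l1 l2 K t"
  have "\<delta>\<^sup>2 \<le> (1 / 2)\<^sup>2"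
    using assms by (intro power_mono) auto
  then have K: "1 / 2 \<le> K" "K < 1"
    using assms by (auto simp: K_def power2_eq_square)
  have l1: "0 < l1"
    using assms by linarith
  have F: "0 < ?F" "?F \<le> l1"
    using bK_rhs_bounds[of l2 l1 K t] assms K by auto
  have "?F \<le> l1 * (\<delta> + t)"
    using bK_rhs_le_linear[of l1 \<delta> t l2] assms l1 unfolding K_def by auto
  then have "(l1 + ?F) * ?F \<le> (2 * l1) * (l1 * (\<delta> + t))"
    using F by (intro mult_mono) auto
  moreover have "0 < \<delta> + t"
    using assms by simp
  ultimately have "l1 * l2 * (1 / 2) / ((2 * l1) * (l1 * (\<delta> + t))) \<le> l1 * l2 * K / ((l1 + ?F) * ?F)"
    using F K l1 assms by (intro frac_le mult_left_mono mult_pos_pos) auto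
  moreover have "l2 / (4 * l1) * (1 / (\<delta> + t)) = l1 * l2 * (1 / 2) / ((2 * l1) * (l1 * (\<delta> + t)))"
    using l1 by simp
  ultimately show ?thesis
    by (simp only: divide_divide_eq_left)
qed

lemma half_period_ge:
  assumes "0 < l2" "l2 \<le> l1" "0 < \<delta>" "\<delta> \<le> 1 / 2"
  shows "l2 / (4 * l1) * ln (1 / \<delta>) \<le> half_period l1 l2 (1 - \<delta>\<^sup>2)"
proof -
  define K where "K = 1 - \<delta>\<^sup>2"
  have l1: "0 < l1"
    using assms by linarith
  have antiderivative: "((\<lambda>t. l2 / (4 * l1) * (1 / (\<delta> + t))) has_integral
      l2 / (4 * l1) * ln (\<delta> + pi) - l2 / (4 * l1) * ln (\<delta> + 0)) {0..pi}"
    using assms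
    by (intro fundamental_theorem_of_calculus)
       (auto intro!: derivative_eq_intros simp: has_real_derivative_iff_has_vector_derivative[symmetric])
  have "bK_rhs l1 l2 K t \<noteq> 0" "l1 + bK_rhs l1 l2 K t \<noteq> 0" for t
    using bK_rhs_bounds[of l2 l1 K t] assms l1 power_le_one[of \<delta> 2] by (auto simp: K_def)
  then have integrable:
    "(\<lambda>t. l1 * l2 * K / (l1 + bK_rhs l1 l2 K t) / bK_rhs l1 l2 K t) integrable_on {0..pi}"
    by (intro integrable_continuous_interval continuous_intros) auto
  have "l2 / (4 * l1) * ln (\<delta> + pi) - l2 / (4 * l1) * ln (\<delta> + 0) \<le> half_period l1 l2 K"
    unfolding half_period_def K_def using half_period_integrand_ge[OF assms]
    by (intro has_integral_le[OF antiderivative integrable_integral[OF integrable[unfolded K_def]]]) auto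
  moreover have "ln (1 / \<delta>) \<le> ln (\<delta> + pi) - ln \<delta>"
    using assms pi_gt3 by (simp add: ln_div)
  then have "l2 / (4 * l1) * ln (1 / \<delta>) \<le> l2 / (4 * l1) * (ln (\<delta> + pi) - ln \<delta>)"
    using assms l1 by (intro mult_left_mono) auto
  ultimately show ?thesis
    by (simp add: K_def right_diff_distrib)
qed

lemma half_period_attains:
  assumes "0 < l2" "l2 \<le> l1" "0 < M"
  shows "\<exists>K. 0 < K \<and> K < 1 \<and> half_period l1 l2 K = M"
proof -
  have l1: "0 < l1"
    using assms by linarith
  define \<delta> where "\<delta> = min (1 / 2) (exp (- (4 * l1 * M / l2)))"
  have \<delta>: "0 < \<delta>" "\<delta> \<le> 1 / 2"
    by (auto simp: \<delta>_def)
  have "ln \<delta> \<le> ln (exp (- (4 * l1 * M / l2)))"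
    using \<delta> by (subst ln_le_cancel_iff) (auto simp: \<delta>_def)
  then have "4 * l1 * M / l2 \<le> ln (1 / \<delta>)"
    using \<delta> by (simp add: ln_div)
  then have "M \<le> l2 / (4 * l1) * ln (1 / \<delta>)"
    using assms l1 by (simp add: field_simps)
  also have "\<dots> \<le> half_period l1 l2 (1 - \<delta>\<^sup>2)"
    using half_period_ge[OF assms(1,2) \<delta>] .
  finally have "M \<le> half_period l1 l2 (1 - \<delta>\<^sup>2)" .
  moreover have "0 < 1 - \<delta>\<^sup>2" "1 - \<delta>\<^sup>2 < 1"
    using \<delta> power_mono[OF \<delta>(2), of 2] by (simp_all add: power2_eq_square)
  ultimately obtain K where K: "0 \<le> K" "K \<le> 1 - \<delta>\<^sup>2" "half_period l1 l2 K = M"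
    using IVT'[of "half_period l1 l2" 0 M "1 - \<delta>\<^sup>2"] continuous_on_half_period[OF assms(1,2)] assms(3)
    by auto
  moreover have "K \<noteq> 0"
    using K assms by auto
  moreover have "K < 1"
    using K(2) \<open>1 - \<delta>\<^sup>2 < 1\<close> by linarith
  ultimately show ?thesis
    by (intro exI[of _ K]) auto
qed

locale helicoid_parameters =
  fixes l1 l2 K :: real
  assumes l2_pos: "0 < l2" and l2_le_l1: "l2 \<le> l1" and K_nonneg: "0 \<le> K" and K_less_1: "K < 1"

sublocale helicoid_parameters \<subseteq> positive_autonomous_ode "bK_rhs l1 l2 K" l1
  using bK_rhs_bounds[OF l2_pos l2_le_l1 K_nonneg K_less_1]
  by unfold_locales (auto intro!: continuous_intros)

context helicoid_parameters
begin

definition x3_rate :: "real \<Rightarrow> real" where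
  "x3_rate s = l1 * l2 * K / (l1 + bK_rhs l1 l2 K s)"

lemma continuous_on_x3_rate: "continuous_on UNIV x3_rate"
proof -
  have "l1 + bK_rhs l1 l2 K s \<noteq> 0" for s
    using F_pos[of s] l2_pos l2_le_l1 by linarith
  then show ?thesis
    unfolding x3_rate_def by (intro continuous_intros) auto
qed

lemma half_period_eq_primitive:
  "half_period l1 l2 K = primitive (\<lambda>s. x3_rate s / bK_rhs l1 l2 K s) pi"
proof -
  have cont: "continuous_on UNIV (\<lambda>s. x3_rate s / bK_rhs l1 l2 K s)"
    using continuous_on_divide[OF continuous_on_x3_rate continuous_F] by simp
  have "primitive (\<lambda>s. x3_rate s / bK_rhs l1 l2 K s) pi =
      integral {0..pi} (\<lambda>s. x3_rate s / bK_rhs l1 l2 K s)"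
    by (intro primitive_eq_integral continuous_on_subset[OF cont]) auto
  then show ?thesis
    by (simp add: half_period_def x3_rate_def)
qed

lemma helicoid_data_solution:
  "helicoid_data l1 l2 K solution (\<lambda>v. primitive (\<lambda>s. x3_rate s / bK_rhs l1 l2 K s) (solution v))
     (arrival_time pi)"
  unfolding helicoid_data_def
  using solution_has_real_derivative primitive_comp_solution_has_real_derivative[OF continuous_on_x3_rate]
    strict_mono_arrival_time[THEN strict_monoD, of 0 pi]
  by (auto simp: solution_eq_iff x3_rate_def)

lemma helicoid_data_period:
  assumes "helicoid_data l1 l2 K b x3 W"
  shows "x3 W = half_period l1 l2 K" "b (v + 2 * W) = b v + 2 * pi" "x3 (v + 2 * W) = x3 v + 2 * x3 W"
proof -
  have b: "b = solution" and W: "W = arrival_time pi"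
    using assms solution_unique[of b] solution_eq_iff[of W pi] unfolding helicoid_data_def by auto
  have x3': "(x3 has_real_derivative x3_rate (solution v)) (at v)" for v
    using assms unfolding helicoid_data_def x3_rate_def b by auto
  have "x3 v = primitive (\<lambda>s. x3_rate s / bK_rhs l1 l2 K s) (solution v)" for v
    using quadrature[OF continuous_on_x3_rate x3'] assms unfolding helicoid_data_def by simp
  then show "x3 W = half_period l1 l2 K"
    by (simp add: W half_period_eq_primitive)
  have b_shift: "solution (v + W) = solution v + pi" for v
    unfolding W by (rule solution_add_arrival_time) simp
  have x3_shift: "x3 (v + W) = x3 v + x3 W" for v
    using shift_eq_of_periodic_derivative[of x3 "\<lambda>v. x3_rate (solution v)" W v] x3' b_shift assms
    by (simp add: x3_rate_def helicoid_data_def)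
  have "v + 2 * W = (v + W) + W"
    by simp
  then show "b (v + 2 * W) = b v + 2 * pi" "x3 (v + 2 * W) = x3 v + 2 * x3 W"
    unfolding b by (simp_all only: b_shift x3_shift)
qed

lemma helicoid_X_period_invariant:
  assumes "helicoid_data l1 l2 K b x3 W"
  shows "e2_mult (0, 0, 2 * x3 W) ` range (helicoid_X l1 l2 K b x3) = range (helicoid_X l1 l2 K b x3)"
    "e2_mult (0, 0, - (2 * x3 W)) ` range (helicoid_X l1 l2 K b x3) = range (helicoid_X l1 l2 K b x3)"
  using e2_mult_helicoid_X[of b "2 * W" x3 "2 * x3 W" l1 l2 K, OF helicoid_data_period(2,3)[OF assms]]
  by (rule vertical_translation_image_range)+

end

theorem proposition4p4:
  fixes l1 l2 T :: real
  assumes "admissible_lambdas l1 l2"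
    and "T \<noteq> 0"
  shows "\<exists>K. K \<in> {-1<..<1} - {0} \<and>
           (\<exists>b x3 W. helicoid_data l1 l2 K b x3 W) \<and>
           (\<forall>b x3 W. helicoid_data l1 l2 K b x3 W \<longrightarrow>
              2 * \<bar>x3 W\<bar> = \<bar>T\<bar> \<and>
              e2_mult (0, 0, T) ` range (helicoid_X l1 l2 K b x3) = range (helicoid_X l1 l2 K b x3))"
proof -
  have l: "0 < l2" "l2 \<le> l1"
    using assms(1) unfolding admissible_lambdas_def by auto
  obtain K where K: "0 < K" "K < 1" "half_period l1 l2 K = \<bar>T\<bar> / 2"
    using half_period_attains[OF l, of "\<bar>T\<bar> / 2"] assms(2) by auto
  interpret helicoid_parameters l1 l2 K
    using l K by unfold_locales auto
  have "2 * \<bar>x3 W\<bar> = \<bar>T\<bar> \<and>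
      e2_mult (0, 0, T) ` range (helicoid_X l1 l2 K b x3) = range (helicoid_X l1 l2 K b x3)"
    if data: "helicoid_data l1 l2 K b x3 W" for b x3 W
  proof -
    have "x3 W = \<bar>T\<bar> / 2"
      using helicoid_data_period(1)[OF data] K by simp
    have "T = 2 * x3 W \<or> T = - (2 * x3 W)"
      using \<open>x3 W = \<bar>T\<bar> / 2\<close> by linarith
    then have "e2_mult (0, 0, T) ` range (helicoid_X l1 l2 K b x3) = range (helicoid_X l1 l2 K b x3)"
      using helicoid_X_period_invariant[OF data] by (elim disjE) simp_all
    moreover have "2 * \<bar>x3 W\<bar> = \<bar>T\<bar>"
      using \<open>x3 W = \<bar>T\<bar> / 2\<close> by simp
    ultimately show ?thesis
      by blast
  qed
  moreover have "K \<in> {-1<..<1} - {0}"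
    using K by simp
  ultimately show ?thesis
    using helicoid_data_solution by blast
qed

end
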